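(* Let $n>1$ be an integer and $M := \langle x,y \mid (xy,\, y^nx)\rangle$. (1) $M$ is cancellative. (2) For all $k\in\mathbb{N}$, $x^ky =_M y^{n^k}x^k$. (3) For all $k\in\mathbb{N}^+$, $\rho_k(M) = n^{k-1}+k-1$. (4) The differences $\rho_k(M)-\rho_{k-1}(M)$ (for $k\ge 2$) are finite but unbounded.
   Context: $M$ is the monoid generated by $x,y$ subject to the single relation $xy = y^n x$; $\langle x,y\rangle$ is the free monoid on $x,y$. $|a|$ is word length; $a=_M b$ means equal images in $M$. $\mathsf{L}_M(a):=\{|b| : b\in\langle x,y\rangle,\ b=_M a\}$, $\mathcal{L}(M):=\{\mathsf{L}_M(a): a\in\langle x,y\rangle\}$. For $k\in\mathbb{N}$, $\mathcal{U}_k(M):=\bigcup\{L\in\mathcal{L}(M): k\in L\}$ and $\rho_k(M):=\sup\mathcal{U}_k(M)$. Cancellative: $ab=ac$ or $ba=ca$ implies $b=c$. *)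

theory Defs
  imports Main "HOL-Library.Extended_Nat"
begin

datatype letter = X | Y

inductive rel_step :: "nat \<Rightarrow> letter list \<Rightarrow> letter list \<Rightarrow> bool" for n where
  "rel_step n (u @ [X, Y] @ v) (u @ replicate n Y @ [X] @ v)"

text \<open>Equality in M = <x,y | xy = y^n x>: the congruence generated by the relation,
  i.e. the reflexive-symmetric-transitive closure of one-step rewriting.\<close>
definition eqM :: "nat \<Rightarrow> letter list \<Rightarrow> letter list \<Rightarrow> bool" where
  "eqM n a b \<longleftrightarrow> (\<lambda>s t. rel_step n s t \<or> rel_step n t s)\<^sup>*\<^sup>* a b"

definition cancellative_M :: "nat \<Rightarrow> bool" where
  "cancellative_M n \<longleftrightarrow>
     (\<forall>a b c. (eqM n (a @ b) (a @ c) \<longrightarrow> eqM n b c) \<and> (eqM n (b @ a) (c @ a) \<longrightarrow> eqM n b c))"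

definition lengths_M :: "nat \<Rightarrow> letter list \<Rightarrow> nat set" where
  "lengths_M n a = {length b | b. eqM n b a}"

definition length_sets_M :: "nat \<Rightarrow> nat set set" where
  "length_sets_M n = {lengths_M n a | a. True}"

definition U_M :: "nat \<Rightarrow> nat \<Rightarrow> nat set" where
  "U_M n k = \<Union>{L \<in> length_sets_M n. k \<in> L}"

definition rho_M :: "nat \<Rightarrow> nat \<Rightarrow> enat" where
  "rho_M n k = Sup (enat ` U_M n k)"

end

theory Submission
  imports Defs
begin

text \<open>Pushing every y to the front with xy = y^n x turns a y preceded by i letters x into
  n^i letters y, so every word equals y^w x^j in M, where j is its number of letters x and w its
  y-weight. Both numbers are invariant under the relation, so they form a complete invariant:
  M is the monoid of pairs (w, j) with (w, j)(w', j') = (w + n^j w', j + j'), cancellative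
  for n > 0. A word equal to one with j letters x and weight w has at most j + w letters, and
  among words of length k the sum j + w is largest for x^(k-1) y, where it is n^(k-1) + k - 1.\<close>

fun y_weight :: "nat \<Rightarrow> letter list \<Rightarrow> nat" where
  "y_weight n [] = 0"
| "y_weight n (X # w) = n * y_weight n w"
| "y_weight n (Y # w) = Suc (y_weight n w)"

lemma y_weight_append:
  "y_weight n (u @ v) = y_weight n u + n ^ count_list u X * y_weight n v"
  by (induction n u rule: y_weight.induct) (auto simp: algebra_simps)

lemma count_list_replicate_letter [simp]:
  "count_list (replicate k X) X = k" "count_list (replicate k Y) X = 0"
  "count_list (replicate k X) Y = 0" "count_list (replicate k Y) Y = k"
  by (induction k) auto

lemma y_weight_replicate [simp]:
  "y_weight n (replicate k X) = 0" "y_weight n (replicate k Y) = k"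
  by (induction k) auto

lemma length_eq_count_X_plus_count_Y: "length w = count_list w X + count_list w Y"
proof (induction w)
  case (Cons a w)
  then show ?case by (cases a) auto
qed simp

lemma count_Y_le_y_weight: "0 < n \<Longrightarrow> count_list w Y \<le> y_weight n w"
  by (induction n w rule: y_weight.induct) (auto intro: le_trans)

lemma y_weight_le: "0 < n \<Longrightarrow> y_weight n w \<le> count_list w Y * n ^ count_list w X"
proof (induction n w rule: y_weight.induct)
  case (3 n w)
  have "Suc 0 + y_weight n w \<le> n ^ count_list w X + count_list w Y * n ^ count_list w X"
    using 3 by (intro add_mono Suc_leI) simp_all
  then show ?case
    by simp
qed auto

lemma eqM_eq_equivclp: "eqM n = equivclp (rel_step n)"
  by (simp add: fun_eq_iff eqM_def equivclp_def symclp_def[abs_def])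

lemma eqM_refl [simp]: "eqM n a a"
  by (simp add: eqM_eq_equivclp)

lemma eqM_sym: "eqM n a b \<Longrightarrow> eqM n b a"
  by (simp add: eqM_eq_equivclp equivclp_sym)

lemma eqM_trans [trans]: "eqM n a b \<Longrightarrow> eqM n b c \<Longrightarrow> eqM n a c"
  unfolding eqM_eq_equivclp by (rule equivclp_trans)

lemma rel_step_append_context: "rel_step n a b \<Longrightarrow> rel_step n (u @ a @ v) (u @ b @ v)"
  by (induction rule: rel_step.induct) (metis append.assoc rel_step.intros)

lemma eqM_append_context: "eqM n a b \<Longrightarrow> eqM n (u @ a @ v) (u @ b @ v)"
  unfolding eqM_eq_equivclp
  by (induction rule: equivclp_induct) (auto intro: equivclp_into_equivclp rel_step_append_context)

lemma rel_step_invariants: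
  "rel_step n a b \<Longrightarrow> count_list a X = count_list b X \<and> y_weight n a = y_weight n b"
  by (induction rule: rel_step.induct) (simp add: y_weight_append)

lemma eqM_invariants:
  "eqM n a b \<Longrightarrow> count_list a X = count_list b X \<and> y_weight n a = y_weight n b"
  unfolding eqM_eq_equivclp
  by (induction rule: equivclp_induct) (auto dest: rel_step_invariants)

lemma eqM_X_replicate_Y: "eqM n (X # replicate m Y) (replicate (n * m) Y @ [X])"
proof (induction m)
  case 0
  show ?case by simp
next
  case (Suc m)
  have "rel_step n ([] @ [X, Y] @ replicate m Y) ([] @ replicate n Y @ [X] @ replicate m Y)"
    by (rule rel_step.intros)
  then have "eqM n (X # replicate (Suc m) Y) (replicate n Y @ (X # replicate m Y) @ [])"
    by (simp add: eqM_eq_equivclp r_into_equivclp)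
  also have "eqM n \<dots> (replicate n Y @ (replicate (n * m) Y @ [X]) @ [])"
    using Suc.IH by (rule eqM_append_context)
  finally show ?case
    by (simp add: replicate_add)
qed

lemma eqM_normal_form: "eqM n w (replicate (y_weight n w) Y @ replicate (count_list w X) X)"
proof (induction n w rule: y_weight.induct)
  case 1
  show ?case by simp
next
  case (2 n w)
  have "eqM n ([X] @ w @ []) ([X] @ (replicate (y_weight n w) Y @ replicate (count_list w X) X) @ [])"
    using "2.IH" by (rule eqM_append_context)
  also have "eqM n \<dots> ([] @ (replicate (n * y_weight n w) Y @ [X]) @ replicate (count_list w X) X)"
    using eqM_append_context[OF eqM_X_replicate_Y, where u = "[]"] by simp
  finally show ?case
    by (simp add: replicate_app_Cons_same)
next
  case (3 n w)
  show ?case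
    using eqM_append_context[OF "3.IH", of "[Y]" "[]"] by simp
qed

lemma eqM_iff_invariants:
  "eqM n a b \<longleftrightarrow> count_list a X = count_list b X \<and> y_weight n a = y_weight n b"
  by (metis eqM_invariants eqM_normal_form eqM_sym eqM_trans)

lemma cancellative_M: "0 < n \<Longrightarrow> cancellative_M n"
  by (auto simp: cancellative_M_def eqM_iff_invariants y_weight_append)

lemma eqM_replicate_X_Y: "eqM n (replicate k X @ [Y]) (replicate (n ^ k) Y @ replicate k X)"
  by (simp add: eqM_iff_invariants y_weight_append)

lemma U_M_eq: "U_M n k = {length b | b c. length c = k \<and> eqM n b c}"
  unfolding U_M_def length_sets_M_def lengths_M_def
  by (blast intro: eqM_refl dest: eqM_sym eqM_trans)

lemma Suc_le_power:
  assumes "2 \<le> n"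
  shows "Suc i \<le> n ^ i"
proof -
  have "Suc i \<le> 2 ^ i"
    using less_exp by (rule Suc_leI)
  also have "\<dots> \<le> n ^ i"
    using assms by (rule power_mono) simp
  finally show ?thesis .
qed

lemma add_mult_power_le:
  assumes "2 \<le> n"
  shows "j + m * n ^ j \<le> n ^ (j + m - 1) + (j + m) - 1"
proof (cases m)
  case 0
  then show ?thesis
    using assms by (cases j) auto
next
  case (Suc i)
  have "m * n ^ j \<le> n ^ i * n ^ j"
    unfolding Suc by (rule mult_le_mono1[OF Suc_le_power[OF assms]])
  then show ?thesis
    using Suc by (simp add: power_add mult.commute)
qed

lemma length_le_if_eqM:
  assumes "2 \<le> n" "eqM n b c"
  shows "length b \<le> n ^ (length c - 1) + length c - 1"
proof -
  let ?j = "count_list c X" and ?m = "count_list c Y"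
  have "length b = count_list b X + count_list b Y"
    by (rule length_eq_count_X_plus_count_Y)
  also have "\<dots> \<le> count_list b X + y_weight n b"
    using count_Y_le_y_weight[of n b] assms(1) by simp
  also have "\<dots> = ?j + y_weight n c"
    using eqM_invariants[OF assms(2)] by simp
  also have "\<dots> \<le> ?j + ?m * n ^ ?j"
    using y_weight_le[of n c] assms(1) by simp
  also have "\<dots> \<le> n ^ (length c - 1) + length c - 1"
    using add_mult_power_le[OF assms(1)] by (simp add: length_eq_count_X_plus_count_Y)
  finally show ?thesis .
qed

lemma rho_M_eq:
  assumes "2 \<le> n" "1 \<le> k"
  shows "rho_M n k = enat (n ^ (k - 1) + k - 1)"
  unfolding rho_M_def
proof (rule Sup_eqI)
  show "u \<le> enat (n ^ (k - 1) + k - 1)" if "u \<in> enat ` U_M n k" for u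
    using that length_le_if_eqM[OF assms(1)] by (auto simp: U_M_eq)
  have "eqM n (replicate (n ^ (k - 1)) Y @ replicate (k - 1) X) (replicate (k - 1) X @ [Y])"
    by (rule eqM_sym[OF eqM_replicate_X_Y])
  then have "n ^ (k - 1) + k - 1 \<in> U_M n k"
    unfolding U_M_eq using assms(2) by force
  then show "enat (n ^ (k - 1) + k - 1) \<le> u" if "\<And>v. v \<in> enat ` U_M n k \<Longrightarrow> v \<le> u" for u
    using that by blast
qed

lemma power_lt_rho_M_diff:
  assumes "2 \<le> n"
  shows "enat (n ^ k) < rho_M n (k + 2) - rho_M n (k + 1)"
proof -
  have "2 * n ^ k \<le> n * n ^ k"
    using assms by (rule mult_le_mono1)
  then have "n ^ k < n * n ^ k + Suc k - (n ^ k + k)"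
    by arith
  then show ?thesis
    using rho_M_eq[OF assms, of "k + 2"] rho_M_eq[OF assms, of "k + 1"] by simp
qed

theorem lemma6p4:
  fixes n :: nat
  assumes "n > 1"
  shows "cancellative_M n
    \<and> (\<forall>k::nat. eqM n (replicate k X @ [Y]) (replicate (n ^ k) Y @ replicate k X))
    \<and> (\<forall>k::nat. k \<ge> 1 \<longrightarrow> rho_M n k = enat (n ^ (k - 1) + k - 1))
    \<and> (\<forall>k::nat. k \<ge> 2 \<longrightarrow> rho_M n k \<noteq> \<infinity> \<and> rho_M n (k - 1) \<noteq> \<infinity>)
    \<and> (\<forall>B::nat. \<exists>k::nat. k \<ge> 2 \<and> rho_M n k - rho_M n (k - 1) > enat B)"
proof (intro conjI allI impI)
  have n: "2 \<le> n"
    using assms by simp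
  show "cancellative_M n"
    using assms by (simp add: cancellative_M)
  show "eqM n (replicate k X @ [Y]) (replicate (n ^ k) Y @ replicate k X)" for k
    by (rule eqM_replicate_X_Y)
  show "rho_M n k = enat (n ^ (k - 1) + k - 1)" if "k \<ge> 1" for k
    using rho_M_eq[OF n that] .
  show "rho_M n k \<noteq> \<infinity>" "rho_M n (k - 1) \<noteq> \<infinity>" if "k \<ge> 2" for k
    using rho_M_eq[OF n] that by simp_all
  show "\<exists>k \<ge> 2. rho_M n k - rho_M n (k - 1) > enat B" for B
  proof (intro exI conjI)
    have "enat B < enat (n ^ B)"
      using Suc_le_power[OF n, of B] by simp
    also have "\<dots> < rho_M n (B + 2) - rho_M n (B + 2 - 1)"
      using power_lt_rho_M_diff[OF n, of B] by simp
    finally show "rho_M n (B + 2) - rho_M n (B + 2 - 1) > enat B" .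
  qed simp
qed

end
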